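(* For every integer $n\ge 2$, none of the Fibonacci numbers $F_1,F_2,\ldots,F_n$ is an eigenvalue of the Fibonacci--Redheffer matrix $F_R(n)$; that is, $F_j\notin\sigma(F_R(n))$ for $j=1,2,\ldots,n$.
   Context: The Fibonacci numbers are $F_1=F_2=1$, $F_n=F_{n-1}+F_{n-2}$ for $n\ge 3$. The Fibonacci--Redheffer matrix $F_R(n)=[F_R(i,j)]_{i,j=1}^n$ is defined by $F_R(i,j)=1$ if $j=1$; $F_R(i,j)=F_i$ if $i\mid j$; and $F_R(i,j)=0$ otherwise. $\sigma(A)$ denotes the set of eigenvalues of a square matrix $A$. *)

theory Defs
  imports "Jordan_Normal_Form.Char_Poly" "HOL-Number_Theory.Fib"
begin

text \<open>Fibonacci--Redheffer matrix F_R(n), 1-based entries (i,j) stored at 0-based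
  index (i-1,j-1).
  Viewed as a complex matrix so that its spectrum is taken over the complex numbers.\<close>
definition fib_redheffer :: "nat \<Rightarrow> complex mat" where
  "fib_redheffer n = mat n n (\<lambda>(i, j).
     if j + 1 = 1 then 1
     else if (i + 1) dvd (j + 1) then of_nat (fib (i + 1))
     else 0)"

end

(*
  Let y be a left eigenvector of F_R(n) for the eigenvalue F_j; since F_1 = F_2 we may take
  j >= 2. Column by column, y satisfies sum_i y_i = F_j y_1 and, for k >= 2,
  sum_{i | k, i < k} F_i y_i = (F_j - F_k) y_k.

  For 1 < k < j the coefficient F_j - F_k is positive, so y_k is a positive multiple of y_1; at
  k = j the left side is then a positive multiple of y_1 while the right side vanishes, so
  y_1 = 0, and by induction y_k = 0 whenever j does not divide k. On the multiples of j the
  equations give F_{mj} |y_{mj}| <= V(m) F_j |y_j|, where V = majorant satisfies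
  sum_{d | m, d < m} V(d) <= (1 - 1/F_{2m}) V(m) and F_j F_{2m} <= F_{mj} is used. Since
  sum_{m >= 2} V(m)/F_{2m} < 1, the first equation y_j = - sum_{m >= 2} y_{mj} forces y_j = 0,
  and then y = 0.
*)

theory Submission
  imports Defs
begin

section \<open>Fibonacci estimates\<close>

lemma fib_less_fib:
  assumes "2 \<le> m" and "m < n"
  shows "fib m < fib n"
proof -
  define k where "k = n - 2"
  have n: "n = Suc (Suc k)" and "1 \<le> k" using assms by (simp_all add: k_def)
  have "fib m \<le> fib (Suc k)" using assms n by (intro fib_mono) simp
  moreover have "fib k > 0" using \<open>1 \<le> k\<close> by (intro fib_neq_0_nat) simp
  ultimately show ?thesis using n by simp
qed

lemma fib_mult_fib_Suc_le: "fib a * fib (Suc b) \<le> fib (a + b)"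
proof (cases a)
  case (Suc c)
  then show ?thesis using fib_add[of c b] by (simp add: mult.commute)
qed simp

lemma fib_add_2_le:
  assumes "1 \<le> n"
  shows "fib (n + 2) \<le> 3 * fib n"
proof -
  obtain k where n: "n = Suc k" using assms by (cases n) auto
  have "fib (n + 2) = fib (n + 1) + fib n" by (rule fib_plus_2)
  moreover have "fib (n + 1) = fib n + fib k" using fib_plus_2[of k] n by simp
  moreover have "fib k \<le> fib n" using n by (intro fib_mono) simp
  ultimately show ?thesis by linarith
qed

lemma fib_add_2_ge:
  assumes "2 \<le> n"
  shows "5 * fib n \<le> 2 * fib (n + 2)"
proof -
  obtain k where n: "n = k + 2" using assms by (metis le_add_diff_inverse2)
  have "fib (n + 2) = fib (n + 1) + fib n" by (rule fib_plus_2)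
  moreover have "fib (n + 1) = fib n + fib (k + 1)" using fib_plus_2[of "k + 1"] n by simp
  moreover have "fib n = fib (k + 1) + fib k" using fib_plus_2[of k] n by simp
  moreover have "fib k \<le> fib (k + 1)" by (intro fib_mono) simp
  ultimately show ?thesis by linarith
qed

lemma fib_mult_fib_double_le:
  assumes "2 \<le> j" and "1 \<le> m"
  shows "fib j * fib (2 * m) \<le> fib (m * j)"
proof (cases "j = 2")
  case False
  have "3 \<le> fib (Suc j)"
    using False assms(1) fib_mono[of 4 "Suc j"] by (simp add: numeral_eq_Suc)
  show ?thesis
    using assms(2)
  proof (induction m rule: dec_induct)
    case (step m)
    have "fib j * fib (2 * Suc m) \<le> fib j * (3 * fib (2 * m))"
      using fib_add_2_le[of "2 * m"] step.hyps by simp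
    also have "\<dots> = 3 * (fib j * fib (2 * m))" by simp
    also have "\<dots> \<le> fib (Suc j) * fib (m * j)"
      using step.IH \<open>3 \<le> fib (Suc j)\<close> by (intro mult_mono) simp_all
    also have "\<dots> \<le> fib (Suc m * j)"
      using fib_mult_fib_Suc_le[of "m * j" j] by (simp add: add.commute mult.commute)
    finally show ?case .
  qed simp
qed (simp add: mult.commute)

section \<open>Proper divisors and the majorant\<close>

definition proper_divisors :: "nat \<Rightarrow> nat set" where
  "proper_divisors k = {d \<in> {1..<k}. d dvd k}"

lemma finite_proper_divisors [simp]: "finite (proper_divisors k)"
  by (simp add: proper_divisors_def)

lemma one_mem_proper_divisors: "2 \<le> k \<Longrightarrow> 1 \<in> proper_divisors k"
  by (simp add: proper_divisors_def)

lemma proper_divisors_multiples: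
  assumes "0 < j"
  shows "{i \<in> proper_divisors (m * j). j dvd i} = (\<lambda>d. d * j) ` proper_divisors m"
proof
  show "{i \<in> proper_divisors (m * j). j dvd i} \<subseteq> (\<lambda>d. d * j) ` proper_divisors m"
  proof
    fix i assume "i \<in> {i \<in> proper_divisors (m * j). j dvd i}"
    then obtain d where "i = d * j" "1 \<le> i" "i < m * j" "i dvd m * j"
      unfolding proper_divisors_def
      by (metis (no_types, lifting) dvd_def mem_Collect_eq atLeastLessThan_iff mult.commute)
    then show "i \<in> (\<lambda>d. d * j) ` proper_divisors m"
      using assms by (auto simp: proper_divisors_def)
  qed
  show "(\<lambda>d. d * j) ` proper_divisors m \<subseteq> {i \<in> proper_divisors (m * j). j dvd i}"
    using assms by (auto simp: proper_divisors_def intro: mult_dvd_mono)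
qed

lemma sum_inverse_squares_le:
  "2 \<le> m \<Longrightarrow> (\<Sum>e = 2..m. 1 / (real e)\<^sup>2) \<le> 3/4 - 1 / real m"
proof (induction m rule: dec_induct)
  case (step m)
  have "1 / (real (Suc m))\<^sup>2 \<le> 1 / (real m * real (Suc m))"
    using step.hyps by (intro divide_left_mono) (auto simp: power2_eq_square)
  also have "\<dots> = 1 / real m - 1 / real (Suc m)"
    using step.hyps by (simp add: field_simps)
  finally have "1 / (real (Suc m))\<^sup>2 \<le> 1 / real m - 1 / real (Suc m)" .
  then show ?case
    using step.IH step.hyps by (simp add: sum.cl_ivl_Suc)
qed simp

lemma sum_proper_divisors_eq_sum_if:
  "(\<Sum>d\<in>proper_divisors k. f d) = (\<Sum>d = 1..<k. if d dvd k then f d else 0)"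
  unfolding proper_divisors_def by (rule sum.inter_filter) simp

lemma sum_proper_divisors_squares_le:
  assumes "2 \<le> m"
  shows "(\<Sum>d\<in>proper_divisors m - {1}. (real d)\<^sup>2) \<le> (real m)\<^sup>2 * (3/4 - 1 / real m)"
proof -
  let ?D = "proper_divisors m - {1}"
  have codivisor: "m div d \<in> {2..m} \<and> real d = real m / real (m div d)" if "d \<in> ?D" for d
  proof -
    from that obtain c where m: "m = d * c" and "2 \<le> d" "d < m"
      by (auto simp: proper_divisors_def elim!: dvdE)
    then have "c \<ge> 2" "c \<le> m" "m div d = c" by (auto intro: ccontr)
    then show ?thesis using m \<open>2 \<le> d\<close> by (simp add: field_simps)
  qed
  have "inj_on (\<lambda>d. m div d) ?D"
    by (rule inj_on_inverseI[where g = "\<lambda>e. m div e"])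
       (auto simp: proper_divisors_def div_div_eq_right)
  then have "(\<Sum>d\<in>?D. (real d)\<^sup>2) = (\<Sum>e\<in>(\<lambda>d. m div d) ` ?D. (real m / real e)\<^sup>2)"
    using codivisor by (simp add: sum.reindex)
  also have "\<dots> \<le> (\<Sum>e = 2..m. (real m / real e)\<^sup>2)"
    using codivisor by (intro sum_mono2) (simp_all add: image_subset_iff)
  also have "\<dots> = (real m)\<^sup>2 * (\<Sum>e = 2..m. 1 / (real e)\<^sup>2)"
    by (simp add: sum_distrib_left power_divide)
  also have "\<dots> \<le> (real m)\<^sup>2 * (3/4 - 1 / real m)"
    using sum_inverse_squares_le[OF assms] by (intro mult_left_mono) auto
  finally show ?thesis .
qed

lemma fib_values:
  "fib 4 = 3" "fib 6 = 8" "fib 8 = 21" "fib 10 = 55" "fib 12 = 144" "fib 14 = 377"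
  by (simp_all add: numeral_eq_Suc)

text \<open>For m \<le> 6 these are the least values allowed by majorant_recursion, which holds with
  equality there; from m = 7 on the crude value m^2/2 suffices.\<close>

definition majorant :: "nat \<Rightarrow> real" where
  "majorant m =
     (if m = 1 then 1 else if m = 2 then 3/2 else if m = 3 then 8/7 else if m = 4 then 21/8
      else if m = 5 then 55/54 else if m = 6 then 144/143 * (1 + 3/2 + 8/7)
      else (real m)\<^sup>2 / 2)"

lemma majorant_nonneg: "0 \<le> majorant m"
  by (simp add: majorant_def)

lemma majorant_le_square: "2 \<le> m \<Longrightarrow> majorant m \<le> (real m)\<^sup>2 / 2"
  by (auto simp: majorant_def power2_eq_square)

lemma majorant_recursion:
  assumes "2 \<le> m"
  shows "(\<Sum>d\<in>proper_divisors m. majorant d) \<le> (1 - 1 / real (fib (2 * m))) * majorant m"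
proof (cases "m \<le> 6")
  case True
  then consider "m = 2" | "m = 3" | "m = 4" | "m = 5" | "m = 6" using assms by linarith
  then show ?thesis
    by cases (simp_all add: sum_proper_divisors_eq_sum_if atLeastLessThan_nat_numeral
      majorant_def fib_values)
next
  case False
  let ?D = "proper_divisors m - {1}"
  have "(\<Sum>d\<in>proper_divisors m. majorant d) = 1 + (\<Sum>d\<in>?D. majorant d)"
    using sum.remove[OF finite_proper_divisors one_mem_proper_divisors[OF assms], of majorant]
    by (simp add: majorant_def)
  also have "\<dots> \<le> 1 + (\<Sum>d\<in>?D. (real d)\<^sup>2) / 2"
    by (auto simp: sum_divide_distrib proper_divisors_def intro!: sum_mono majorant_le_square)
  also have "\<dots> \<le> 1 + (real m)\<^sup>2 * (3/4 - 1 / real m) / 2"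
    using sum_proper_divisors_squares_le[OF assms] by simp
  also have "\<dots> = 3/8 * (real m)\<^sup>2 + (1 - real m / 2)"
    using assms by (simp add: field_simps power2_eq_square)
  also have "\<dots> \<le> 7/8 * ((real m)\<^sup>2 / 2)"
    using assms zero_le_power2[of "real m"] by linarith
  also have "\<dots> \<le> (1 - 1 / real (fib (2 * m))) * majorant m"
  proof -
    have "fib 6 \<le> fib (2 * m)" using False by (intro fib_mono) simp
    then have "1 / real (fib (2 * m)) \<le> 1 / 8" by (simp add: fib_values field_simps)
    then show ?thesis using False by (simp add: majorant_def)
  qed
  finally show ?thesis .
qed

lemma sum_le_geometric:
  fixes f :: "nat \<Rightarrow> real"
  assumes "0 \<le> r" and "r < 1" and "\<And>m. 0 \<le> f m"
    and decay: "\<And>m. a \<le> m \<Longrightarrow> f (Suc m) \<le> r * f m"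
  shows "(\<Sum>m = a..N. f m) \<le> f a / (1 - r)"
proof (cases "a \<le> N")
  case True
  then have "(\<Sum>m = a..N. f m) \<le> (f a - r * f N) / (1 - r)"
  proof (induction N rule: dec_induct)
    case base
    then show ?case using assms(2) by (simp add: field_simps)
  next
    case (step N)
    have "f (Suc N) \<le> (r * f N - r * f (Suc N)) / (1 - r)"
      using decay[OF step.hyps(1)] assms(2) by (simp add: field_simps)
    then show ?case
      using step.IH step.hyps by (simp add: sum.cl_ivl_Suc diff_divide_distrib)
  qed
  also have "\<dots> \<le> f a / (1 - r)"
    using assms by (simp add: divide_right_mono)
  finally show ?thesis .
qed (use assms in simp)

lemma square_div_fib_double_decay:
  assumes "5 \<le> m"
  shows "(real (Suc m))\<^sup>2 / real (fib (2 * Suc m))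
    \<le> 3/5 * ((real m)\<^sup>2 / real (fib (2 * m)))"
proof -
  have fib_ratio: "5 * real (fib (2 * m)) \<le> 2 * real (fib (2 * Suc m))"
    using fib_add_2_ge[of "2 * m"] assms by simp
  have square_ratio: "2 * (real m + 1)\<^sup>2 \<le> 3 * (real m)\<^sup>2"
  proof -
    have "5 \<le> real m" using assms by simp
    moreover have "5 * real m \<le> real m * real m" using assms by (intro mult_right_mono) simp_all
    moreover have "2 * (real m + 1)\<^sup>2 = 2 * (real m * real m) + 4 * real m + 2"
      by (simp add: power2_eq_square algebra_simps)
    ultimately show ?thesis unfolding power2_eq_square by linarith
  qed
  have "0 < fib (2 * m)" using assms by (intro fib_neq_0_nat) simp
  moreover have "0 < fib (2 * Suc m)" by (intro fib_neq_0_nat) simp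
  ultimately show ?thesis
    using mult_mono[OF square_ratio fib_ratio] by (simp add: field_simps)
qed

lemma sum_majorant_div_fib_less_1: "(\<Sum>m = 2..M. majorant m / real (fib (2 * m))) < 1"
proof -
  let ?g = "\<lambda>m. (real m)\<^sup>2 / real (fib (2 * m))"
  have "(\<Sum>m = 2..M. majorant m / real (fib (2 * m)))
      \<le> (\<Sum>m \<in> {2..<7} \<union> {7..M}. majorant m / real (fib (2 * m)))"
    by (intro sum_mono2) (auto simp: majorant_nonneg)
  also have "\<dots>
      = (\<Sum>m = 2..<7. majorant m / real (fib (2 * m))) + (\<Sum>m = 7..M. ?g m) / 2"
    by (subst sum.union_disjoint) (auto simp: majorant_def sum_divide_distrib intro!: sum.cong)
  also have "(\<Sum>m = 7..M. ?g m) \<le> ?g 7 / (1 - 3/5)"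
    using square_div_fib_double_decay by (intro sum_le_geometric) simp_all
  finally show ?thesis \<comment> \<open>the bound obtained is about 0.974\<close>
    by (simp add: atLeastLessThan_nat_numeral majorant_def fib_values)
qed

lemma sum_positive_multiples:
  fixes y :: "nat \<Rightarrow> 'a :: real_algebra_1"
  assumes "finite A" and "A \<noteq> {}"
    and "\<And>i. i \<in> A \<Longrightarrow> 0 < w i"
    and "\<And>i. i \<in> A \<Longrightarrow> \<exists>c > 0. y i = of_real c * a"
  shows "\<exists>s > 0. (\<Sum>i\<in>A. of_real (w i) * y i) = of_real s * a"
proof -
  obtain c where c: "\<And>i. i \<in> A \<Longrightarrow> 0 < c i \<and> y i = of_real (c i) * a"
    using assms(4) by metis
  have "(\<Sum>i\<in>A. of_real (w i) * y i) = of_real (\<Sum>i\<in>A. w i * c i) * a"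
    using c by (simp add: sum_distrib_right mult.assoc)
  moreover have "0 < (\<Sum>i\<in>A. w i * c i)"
    using assms(1-3) c by (intro sum_pos) simp_all
  ultimately show ?thesis by blast
qed

section \<open>Left eigenvectors for the eigenvalue F_j\<close>

context
  fixes n j :: nat and y :: "nat \<Rightarrow> complex"
  assumes j: "2 \<le> j" "j \<le> n"
    and first_column: "(\<Sum>i = 1..n. y i) = of_nat (fib j) * y 1"
    and column: "\<And>k. 2 \<le> k \<Longrightarrow> k \<le> n \<Longrightarrow>
      (\<Sum>i\<in>proper_divisors k. of_nat (fib i) * y i) = (of_nat (fib j) - of_nat (fib k)) * y k"
begin

lemma sum_proper_divisors_positive_multiple:
  assumes "2 \<le> k" and "\<And>i. i \<in> proper_divisors k \<Longrightarrow> \<exists>c > 0. y i = of_real c * y 1"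
  shows "\<exists>s > 0. (\<Sum>i\<in>proper_divisors k. of_nat (fib i) * y i) = of_real s * y 1"
proof -
  have "\<exists>s > 0. (\<Sum>i\<in>proper_divisors k. of_real (real (fib i)) * y i) = of_real s * y 1"
    using one_mem_proper_divisors[OF assms(1)] assms(2)
    by (intro sum_positive_multiples) (auto simp: proper_divisors_def intro: fib_neq_0_nat)
  then show ?thesis by simp
qed

lemma left_eigenvector_positive_multiple_below:
  assumes "1 \<le> k" and "k < j"
  shows "\<exists>c > 0. y k = of_real c * y 1"
  using assms
proof (induction k rule: less_induct)
  case (less k)
  show ?case
  proof (cases "k = 1")
    case True
    then show ?thesis by (intro exI[of _ 1]) simp
  next
    case False
    then have k: "2 \<le> k" "k \<le> n" using less.prems j by auto
    have "\<exists>c > 0. y i = of_real c * y 1" if "i \<in> proper_divisors k" for i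
      using that less.IH[of i] less.prems by (simp add: proper_divisors_def)
    then obtain s where "s > 0" and s: "(of_nat (fib j) - of_nat (fib k)) * y k = of_real s * y 1"
      using sum_proper_divisors_positive_multiple[OF k(1)] column[OF k] by auto
    define D where "D = real (fib j) - real (fib k)"
    have "D > 0" using fib_less_fib[OF k(1) less.prems(2)] by (simp add: D_def)
    have "of_real D * y k = of_real s * y 1" using s by (simp add: D_def)
    then have "y k = of_real (s / D) * y 1"
      using \<open>D > 0\<close> by (simp add: of_real_divide eq_divide_eq mult.commute)
    then show ?thesis using \<open>s > 0\<close> \<open>D > 0\<close> by (intro exI[of _ "s / D"]) simp
  qed
qed

lemma left_eigenvector_1_eq_0: "y 1 = 0"
proof -
  have "\<exists>c > 0. y i = of_real c * y 1" if "i \<in> proper_divisors j" for i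
    using that left_eigenvector_positive_multiple_below by (simp add: proper_divisors_def)
  then obtain s where "s > 0"
    and "(\<Sum>i\<in>proper_divisors j. of_nat (fib i) * y i) = of_real s * y 1"
    using sum_proper_divisors_positive_multiple[OF j(1)] by blast
  then show ?thesis using column[OF j] by simp
qed

lemma left_eigenvector_eq_0_if_not_dvd:
  assumes "k \<le> n" and "\<not> j dvd k"
  shows "y k = 0"
  using assms
proof (induction k rule: less_induct)
  case (less k)
  consider "k = 0" | "k = 1" | "2 \<le> k" by linarith
  then show ?case
  proof cases
    case 3
    have "y i = 0" if "i \<in> proper_divisors k" for i
      using that less.IH[of i] less.prems by (auto simp: proper_divisors_def dest: dvd_trans)
    then have "(of_nat (fib j) - of_nat (fib k)) * y k = 0"
      using column[OF 3 less.prems(1)] by simp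
    moreover have "fib k \<noteq> fib j"
      using fib_less_fib[OF 3, of j] fib_less_fib[OF j(1), of k] less.prems(2)
      by (cases k j rule: linorder_cases) auto
    ultimately show ?thesis by simp
  qed (use less.prems left_eigenvector_1_eq_0 in auto)
qed

lemma sum_proper_divisors_multiple:
  assumes "m * j \<le> n"
  shows "(\<Sum>i\<in>proper_divisors (m * j). of_nat (fib i) * y i)
       = (\<Sum>d\<in>proper_divisors m. of_nat (fib (d * j)) * y (d * j))"
proof -
  have "(\<Sum>i\<in>proper_divisors (m * j). of_nat (fib i) * y i)
      = (\<Sum>i\<in>{i \<in> proper_divisors (m * j). j dvd i}. of_nat (fib i) * y i)"
    using assms left_eigenvector_eq_0_if_not_dvd
    by (intro sum.mono_neutral_right) (auto simp: proper_divisors_def)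
  also have "\<dots> = (\<Sum>d\<in>proper_divisors m. of_nat (fib (d * j)) * y (d * j))"
    using j by (simp add: proper_divisors_multiples sum.reindex inj_on_def)
  finally show ?thesis .
qed

lemma norm_left_eigenvector_multiple_le_sum:
  assumes "2 \<le> m" and "m * j \<le> n"
  shows "(real (fib (m * j)) - real (fib j)) * cmod (y (m * j))
    \<le> (\<Sum>d\<in>proper_divisors m. real (fib (d * j)) * cmod (y (d * j)))"
proof -
  have "j < m * j" using assms(1) j by simp
  then have "2 \<le> m * j" using j(1) by linarith
  have gap: "fib j < fib (m * j)" using fib_less_fib[OF j(1) \<open>j < m * j\<close>] .
  have "(of_nat (fib j) - of_nat (fib (m * j)) :: complex)
      = - of_real (real (fib (m * j)) - real (fib j))"
    by simp
  then have "(real (fib (m * j)) - real (fib j)) * cmod (y (m * j))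
      = cmod ((of_nat (fib j) - of_nat (fib (m * j))) * y (m * j))"
    using gap by (simp only: norm_mult norm_minus_cancel norm_of_real)
  also have "\<dots> = cmod (\<Sum>d\<in>proper_divisors m. of_nat (fib (d * j)) * y (d * j))"
    using column[OF \<open>2 \<le> m * j\<close> assms(2)] sum_proper_divisors_multiple[OF assms(2)] by simp
  also have "\<dots> \<le> (\<Sum>d\<in>proper_divisors m. real (fib (d * j)) * cmod (y (d * j)))"
    by (rule order_trans[OF norm_sum]) (simp add: norm_mult)
  finally show ?thesis .
qed

lemma norm_left_eigenvector_multiple_le:
  assumes "1 \<le> m" and "m * j \<le> n"
  shows "real (fib (m * j)) * cmod (y (m * j)) \<le> majorant m * real (fib j) * cmod (y j)"
  using assms
proof (induction m rule: less_induct)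
  case (less m)
  show ?case
  proof (cases "m = 1")
    case False
    then have m: "2 \<le> m" using less.prems by simp
    have "0 < fib (m * j)" using m j by (intro fib_neq_0_nat) simp
    define t where "t = real (fib j) / real (fib (m * j))"
    \<comment> \<open>As t \<le> 1/F_{2m}, the slack in majorant_recursion absorbs the diagonal entry F_j.\<close>
    have t: "t \<le> 1 / real (fib (2 * m))" and "t < 1"
      using fib_mult_fib_double_le[OF j(1), of m] fib_less_fib[OF j(1), of "m * j"]
        \<open>0 < fib (m * j)\<close> fib_neq_0_nat[of "2 * m"] m j
      by (simp_all add: t_def field_simps flip: of_nat_mult)
    have "(1 - t) * (real (fib (m * j)) * cmod (y (m * j)))
        = (real (fib (m * j)) - real (fib j)) * cmod (y (m * j))"
      using \<open>0 < fib (m * j)\<close> by (simp add: t_def field_simps)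
    also have "\<dots> \<le> (\<Sum>d\<in>proper_divisors m. real (fib (d * j)) * cmod (y (d * j)))"
      by (rule norm_left_eigenvector_multiple_le_sum[OF m less.prems(2)])
    also have "\<dots> \<le> (\<Sum>d\<in>proper_divisors m. majorant d * real (fib j) * cmod (y j))"
    proof (rule sum_mono)
      fix d assume "d \<in> proper_divisors m"
      then have "1 \<le> d" "d < m" "d * j \<le> n"
        using less.prems by (auto simp: proper_divisors_def intro: order_trans[rotated])
      then show "real (fib (d * j)) * cmod (y (d * j)) \<le> majorant d * real (fib j) * cmod (y j)"
        using less.IH by blast
    qed
    also have "\<dots> = (\<Sum>d\<in>proper_divisors m. majorant d) * (real (fib j) * cmod (y j))"
      by (simp add: sum_distrib_right mult.assoc)
    also have "\<dots> \<le> (1 - 1 / real (fib (2 * m))) * majorant m * (real (fib j) * cmod (y j))"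
      by (intro mult_right_mono majorant_recursion[OF m]) simp
    also have "\<dots> \<le> (1 - t) * (majorant m * real (fib j) * cmod (y j))"
      using t majorant_nonneg[of m] by (simp add: mult.assoc mult_right_mono)
    finally show ?thesis using \<open>t < 1\<close> by simp
  qed (simp add: majorant_def)
qed

lemma norm_left_eigenvector_multiple_le_div_fib:
  assumes "2 \<le> m" and "m * j \<le> n"
  shows "cmod (y (m * j)) \<le> majorant m / real (fib (2 * m)) * cmod (y j)"
proof -
  have "0 < fib j" and fib_double: "0 < fib (2 * m)"
    using assms(1) j(1) by (simp_all add: fib_neq_0_nat)
  then have pos: "0 < real (fib j) * real (fib (2 * m))" by simp
  have "real (fib j) * real (fib (2 * m)) \<le> real (fib (m * j))"
    using fib_mult_fib_double_le[OF j(1), of m] assms(1) by (simp flip: of_nat_mult)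
  then have "real (fib j) * real (fib (2 * m)) * cmod (y (m * j))
      \<le> real (fib (m * j)) * cmod (y (m * j))"
    by (rule mult_right_mono) simp
  also have "\<dots> \<le> majorant m * real (fib j) * cmod (y j)"
    using assms by (intro norm_left_eigenvector_multiple_le) simp_all
  also have "\<dots>
      = real (fib j) * real (fib (2 * m)) * (majorant m / real (fib (2 * m)) * cmod (y j))"
    using fib_double by simp
  finally show ?thesis using pos by (rule mult_left_le_imp_le)
qed

lemma sum_left_eigenvector_multiples:
  "(\<Sum>i = 1..n. y i) = (\<Sum>m = 1..n div j. y (m * j))"
proof -
  have "(\<Sum>i = 1..n. y i) = (\<Sum>i\<in>{i \<in> {1..n}. j dvd i}. y i)"
    using left_eigenvector_eq_0_if_not_dvd by (intro sum.mono_neutral_right) auto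
  also have "{i \<in> {1..n}. j dvd i} = (\<lambda>m. m * j) ` {1..n div j}"
  proof (intro Set.set_eqI iffI)
    fix i assume "i \<in> {i \<in> {1..n}. j dvd i}"
    then obtain m where "i = m * j" "1 \<le> i" "i \<le> n" by (auto simp: mult.commute elim!: dvdE)
    moreover from this have "m \<in> {1..n div j}"
      using j by (auto simp: less_eq_div_iff_mult_less_eq intro: Suc_leI)
    ultimately show "i \<in> (\<lambda>m. m * j) ` {1..n div j}" by blast
  next
    fix i assume "i \<in> (\<lambda>m. m * j) ` {1..n div j}"
    then show "i \<in> {i \<in> {1..n}. j dvd i}"
      using j by (auto simp: less_eq_div_iff_mult_less_eq)
  qed
  also have "(\<Sum>i\<in>(\<lambda>m. m * j) ` {1..n div j}. y i) = (\<Sum>m = 1..n div j. y (m * j))"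
    using j by (simp add: sum.reindex inj_on_def)
  finally show ?thesis .
qed

lemma left_eigenvector_j_eq_0: "y j = 0"
proof -
  let ?N = "n div j"
  have "1 \<le> ?N" using div_le_mono[OF j(2), of j] j by simp
  then have "y j + (\<Sum>m = 2..?N. y (m * j)) = 0"
    using sum_left_eigenvector_multiples first_column left_eigenvector_1_eq_0
    by (simp add: sum.atLeast_Suc_atMost numeral_2_eq_2)
  then have "y j = - (\<Sum>m = 2..?N. y (m * j))"
    by (simp add: eq_neg_iff_add_eq_0)
  then have "cmod (y j) = cmod (\<Sum>m = 2..?N. y (m * j))"
    by simp
  also have "\<dots> \<le> (\<Sum>m = 2..?N. cmod (y (m * j)))"
    by (rule norm_sum)
  also have "\<dots> \<le> (\<Sum>m = 2..?N. majorant m / real (fib (2 * m)) * cmod (y j))"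
    using j by (intro sum_mono norm_left_eigenvector_multiple_le_div_fib)
      (auto simp: less_eq_div_iff_mult_less_eq)
  also have "\<dots> = (\<Sum>m = 2..?N. majorant m / real (fib (2 * m))) * cmod (y j)"
    by (simp add: sum_distrib_right)
  finally have "(1 - (\<Sum>m = 2..?N. majorant m / real (fib (2 * m)))) * cmod (y j) \<le> 0"
    by (simp add: algebra_simps)
  then show ?thesis
    using sum_majorant_div_fib_less_1[of ?N] by (simp add: mult_le_0_iff)
qed

lemma left_eigenvector_eq_0:
  assumes "1 \<le> k" and "k \<le> n"
  shows "y k = 0"
proof (cases "j dvd k")
  case True
  then obtain m where k: "k = m * j" by (metis dvd_def mult.commute)
  then have "1 \<le> m" using assms(1) by (cases m) auto
  then have "real (fib k) * cmod (y k) \<le> 0"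
    using norm_left_eigenvector_multiple_le[of m] left_eigenvector_j_eq_0 assms k by simp
  moreover have "0 < fib k" using assms(1) by (intro fib_neq_0_nat) simp
  ultimately show ?thesis by (simp add: mult_le_0_iff)
qed (use assms left_eigenvector_eq_0_if_not_dvd in simp)

end

section \<open>The Fibonacci--Redheffer matrix\<close>

lemma eigenvalue_imp_left_eigenvector:
  fixes A :: "'a :: field mat"
  assumes A: "A \<in> carrier_mat n n" and "eigenvalue A \<mu>"
  obtains v where "v \<in> carrier_vec n" and "v \<noteq> 0\<^sub>v n"
    and "\<And>c. c < n \<Longrightarrow> (\<Sum>i<n. A $$ (i, c) * v $ i) = \<mu> * v $ c"
proof -
  have At: "transpose_mat A \<in> carrier_mat n n" using A by simp
  have "eigenvalue (transpose_mat A) \<mu>"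
    using assms eigenvalue_root_char_poly[OF A] eigenvalue_root_char_poly[OF At] by simp
  then obtain v where v: "v \<in> carrier_vec n" "v \<noteq> 0\<^sub>v n" "transpose_mat A *\<^sub>v v = \<mu> \<cdot>\<^sub>v v"
    unfolding eigenvalue_def eigenvector_def using A by auto
  have "(\<Sum>i<n. A $$ (i, c) * v $ i) = \<mu> * v $ c" if "c < n" for c
  proof -
    have "(transpose_mat A *\<^sub>v v) $ c = (\<mu> \<cdot>\<^sub>v v) $ c" using v(3) by simp
    then show ?thesis
      using A v(1) that by (simp add: scalar_prod_def atLeast0LessThan)
  qed
  with v(1,2) show ?thesis by (rule that)
qed

lemma index_fib_redheffer:
  assumes "i < n" and "k < n"
  shows "fib_redheffer n $$ (i, k)
    = (if k = 0 then 1 else if Suc i dvd Suc k then of_nat (fib (Suc i)) else 0)"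
  using assms by (simp add: fib_redheffer_def)

lemma fib_redheffer_left_eigenvector:
  assumes "eigenvalue (fib_redheffer n) \<mu>"
  obtains y :: "nat \<Rightarrow> complex"
  where "\<exists>k\<in>{1..n}. y k \<noteq> 0"
    and "(\<Sum>i = 1..n. y i) = \<mu> * y 1"
    and "\<And>k. 2 \<le> k \<Longrightarrow> k \<le> n \<Longrightarrow>
      (\<Sum>i\<in>proper_divisors k. of_nat (fib i) * y i) = (\<mu> - of_nat (fib k)) * y k"
proof -
  have A: "fib_redheffer n \<in> carrier_mat n n" by (simp add: fib_redheffer_def)
  obtain v where v: "v \<in> carrier_vec n" "v \<noteq> 0\<^sub>v n"
    and column: "\<And>c. c < n \<Longrightarrow> (\<Sum>i<n. fib_redheffer n $$ (i, c) * v $ i) = \<mu> * v $ c"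
    using eigenvalue_imp_left_eigenvector[OF A assms] by blast
  define y where "y i = v $ (i - 1)" for i
  obtain c where "c < n" "v $ c \<noteq> 0"
    using v by (metis carrier_vecD eq_vecI index_zero_vec(1,2))
  then have nonzero: "\<exists>k\<in>{1..n}. y k \<noteq> 0"
    by (intro bexI[of _ "Suc c"]) (simp_all add: y_def)
  then have "0 < n" by auto
  have "(\<Sum>i<n. fib_redheffer n $$ (i, 0) * v $ i) = (\<Sum>i<n. v $ i)"
    using \<open>0 < n\<close> by (intro sum.cong) (simp_all add: index_fib_redheffer)
  then have "(\<Sum>i = 1..n. y i) = \<mu> * y 1"
    using column[OF \<open>0 < n\<close>] by (simp add: sum.atLeast1_atMost_eq y_def)
  moreover have "(\<Sum>i\<in>proper_divisors k. of_nat (fib i) * y i) = (\<mu> - of_nat (fib k)) * y k"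
    if k: "2 \<le> k" "k \<le> n" for k
  proof -
    have "(\<Sum>i<n. fib_redheffer n $$ (i, k - 1) * v $ i)
        = (\<Sum>i<n. (if Suc i dvd k then of_nat (fib (Suc i)) else 0) * v $ i)"
      using k by (intro sum.cong) (simp_all add: index_fib_redheffer)
    then have "(\<Sum>i = 1..n. (if i dvd k then of_nat (fib i) else 0) * y i) = \<mu> * y k"
      using column[of "k - 1"] k by (simp add: sum.atLeast1_atMost_eq y_def)
    also have "(\<Sum>i = 1..n. (if i dvd k then of_nat (fib i) else 0) * y i)
        = (\<Sum>i = 1..n. if i dvd k then of_nat (fib i) * y i else 0)"
      by (intro sum.cong) simp_all
    also have "\<dots> = (\<Sum>i\<in>{i \<in> {1..n}. i dvd k}. of_nat (fib i) * y i)"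
      by (rule sum.inter_filter[symmetric]) simp
    also have "{i \<in> {1..n}. i dvd k} = insert k (proper_divisors k)"
      using k by (auto simp: proper_divisors_def dest: dvd_imp_le)
    finally have
      "of_nat (fib k) * y k + (\<Sum>i\<in>proper_divisors k. of_nat (fib i) * y i) = \<mu> * y k"
      by (simp add: proper_divisors_def)
    then show ?thesis by (simp add: algebra_simps)
  qed
  ultimately show ?thesis using nonzero that by blast
qed

theorem theorem4:
  fixes n j :: nat
  assumes "n \<ge> 2" and "1 \<le> j" and "j \<le> n"
  shows "\<not> eigenvalue (fib_redheffer n) (of_nat (fib j))"
proof
  assume "eigenvalue (fib_redheffer n) (of_nat (fib j))"
  define j' where "j' = max 2 j"
  have j': "2 \<le> j'" "j' \<le> n" using assms by (simp_all add: j'_def)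
  have "fib j' = fib j" using assms by (cases "j = 1") (simp_all add: j'_def)
  with \<open>eigenvalue _ _\<close> have "eigenvalue (fib_redheffer n) (of_nat (fib j'))" by simp
  then obtain y :: "nat \<Rightarrow> complex" where nonzero: "\<exists>k\<in>{1..n}. y k \<noteq> 0"
    and first_column: "(\<Sum>i = 1..n. y i) = of_nat (fib j') * y 1"
    and column: "\<And>k. 2 \<le> k \<Longrightarrow> k \<le> n \<Longrightarrow>
      (\<Sum>i\<in>proper_divisors k. of_nat (fib i) * y i) = (of_nat (fib j') - of_nat (fib k)) * y k"
    by (rule fib_redheffer_left_eigenvector) blast
  show False
    using nonzero left_eigenvector_eq_0[OF j' first_column column] by auto
qed

end
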